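(* Let $S$ be an additively reduced and additively Furstenberg semidomain and let $G$ be a finitely generated torsion-free abelian group (with a total order compatible with addition). The following statements are equivalent. (1) $\mathscr{A}_+(S)=S^\times$. (2) Every $f\in S[\![G]\!]$ with $|\operatorname{supp}(f)|>1$ can be expressed as the sum of at most three irreducible elements of $S[\![G]\!]$. (3) There exists $n\in\mathbb{N}$ with $n>2$ such that every $f\in S[\![G]\!]$ with $|\operatorname{supp}(f)|>1$ can be expressed as the sum of at most $n$ irreducible elements of $S[\![G]\!]$.
   Context: A semidomain is a subsemiring (containing $0$ and $1$) of an integral domain; all semirings are commutative. For a semidomain $S$, $S^\times$ denotes the group of units of the multiplicative monoid $S\setminus\{0\}$. $S$ is additively reduced if $0$ is the only invertible element of $(S,+)$. An additive atom of $S$ is a nonzero $a\in S$ such that $a=b+c$ with $b,c\in S$ implies $b=0$ or $c=0$; $\mathscr{A}_+(S)$ is the set of additive atoms. $S$ is additively Furstenberg if every nonzero $s\in S$ can be written $s=a+t$ with $a\in\mathscr{A}_+(S)$, $t\in S$. For a torsion-free abelian group $G$ with a fixed total order compatible with addition, the group series semidomain is $S[\![G]\!]=\{\sum_{i=0}^\infty s_ix^{g_i} : s_i\in S,\ g_i\in G,\ g_i<g_{i+1}\text{ for all } i\}$, with addition and multiplication defined as for polynomials; elements are written with the convention that $s_i=0$ implies $s_{i+1}=0$. The support of $f=\sum s_ix^{g_i}$ is $\operatorname{supp}(f)=\{g_i : s_i\neq0\}$. An element $f$ is irreducible if it is nonzero, not a unit of $S[\![G]\!]$, and $f=pq$ implies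 one of $p,q$ is a unit. *)

theory Defs
  imports Main
begin

text \<open>A semidomain is a subsemiring (containing 0 and 1) of an integral domain;
  we model it as a subset S of a type of class idom.\<close>
definition semidomain :: "'a::idom set \<Rightarrow> bool" where
  "semidomain S \<longleftrightarrow> 0 \<in> S \<and> 1 \<in> S \<and>
     (\<forall>a\<in>S. \<forall>b\<in>S. a + b \<in> S) \<and> (\<forall>a\<in>S. \<forall>b\<in>S. a * b \<in> S)"

definition sd_units :: "'a::idom set \<Rightarrow> 'a set" where
  "sd_units S = {u \<in> S - {0}. \<exists>v\<in>S - {0}. u * v = 1}"

definition additively_reduced :: "'a::idom set \<Rightarrow> bool" where
  "additively_reduced S \<longleftrightarrow> (\<forall>a\<in>S. (\<exists>b\<in>S. a + b = 0) \<longrightarrow> a = 0)"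

definition additive_atoms :: "'a::idom set \<Rightarrow> 'a set" where
  "additive_atoms S = {a \<in> S. a \<noteq> 0 \<and> (\<forall>b\<in>S. \<forall>c\<in>S. a = b + c \<longrightarrow> b = 0 \<or> c = 0)}"

definition additively_Furstenberg :: "'a::idom set \<Rightarrow> bool" where
  "additively_Furstenberg S \<longleftrightarrow>
     (\<forall>s\<in>S. s \<noteq> 0 \<longrightarrow> (\<exists>a\<in>additive_atoms S. \<exists>t\<in>S. s = a + t))"

inductive_set gen_subgroup :: "'g::ab_group_add set \<Rightarrow> 'g set" for B where
  gen_zero: "0 \<in> gen_subgroup B"
| gen_base: "b \<in> B \<Longrightarrow> b \<in> gen_subgroup B"
| gen_add: "x \<in> gen_subgroup B \<Longrightarrow> y \<in> gen_subgroup B \<Longrightarrow> x + y \<in> gen_subgroup B"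
| gen_neg: "x \<in> gen_subgroup B \<Longrightarrow> - x \<in> gen_subgroup B"

definition finitely_generated_group :: "'g::ab_group_add itself \<Rightarrow> bool" where
  "finitely_generated_group _ \<longleftrightarrow> (\<exists>B::'g set. finite B \<and> gen_subgroup B = UNIV)"

text \<open>An element \<open>\<Sum> s_i x^{g_i}\<close> is represented by its coefficient function
  \<open>G \<Rightarrow> S\<close>; its support must be listable as a strictly increasing
  sequence \<open>g_0 < g_1 < \<dots>\<close> (finite or indexed by \<open>\<nat>\<close>).\<close>
definition gsupp :: "('g \<Rightarrow> 'a::zero) \<Rightarrow> 'g set" where
  "gsupp f = {g. f g \<noteq> 0}"

definition gseries :: "'a::idom set \<Rightarrow> ('g::linordered_ab_group_add \<Rightarrow> 'a) set" where
  "gseries S = {f. (\<forall>g. f g \<in> S) \<and>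
      (finite (gsupp f) \<or> (\<exists>e::nat \<Rightarrow> 'g. strict_mono e \<and> gsupp f \<subseteq> range e))}"

definition gs_add :: "('g \<Rightarrow> 'a::idom) \<Rightarrow> ('g \<Rightarrow> 'a) \<Rightarrow> 'g \<Rightarrow> 'a" where
  "gs_add f h = (\<lambda>g. f g + h g)"

text \<open>Multiplication as for polynomials (Cauchy product); the sum is finite
  for elements of \<open>gseries S\<close>.\<close>
definition gs_mult :: "('g::linordered_ab_group_add \<Rightarrow> 'a::idom) \<Rightarrow> ('g \<Rightarrow> 'a) \<Rightarrow> 'g \<Rightarrow> 'a" where
  "gs_mult f h = (\<lambda>g. \<Sum>a\<in>{a. f a \<noteq> 0 \<and> h (g - a) \<noteq> 0}. f a * h (g - a))"

definition gs_one :: "'g::linordered_ab_group_add \<Rightarrow> 'a::idom" where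
  "gs_one = (\<lambda>g. if g = 0 then 1 else 0)"

definition gs_zero :: "'g \<Rightarrow> 'a::idom" where
  "gs_zero = (\<lambda>g. 0)"

definition gs_unit :: "'a::idom set \<Rightarrow> ('g::linordered_ab_group_add \<Rightarrow> 'a) \<Rightarrow> bool" where
  "gs_unit S u \<longleftrightarrow> u \<in> gseries S \<and> (\<exists>v\<in>gseries S. gs_mult u v = gs_one)"

definition gs_irreducible :: "'a::idom set \<Rightarrow> ('g::linordered_ab_group_add \<Rightarrow> 'a) \<Rightarrow> bool" where
  "gs_irreducible S f \<longleftrightarrow> f \<in> gseries S \<and> f \<noteq> gs_zero \<and> \<not> gs_unit S f \<and>
     (\<forall>p\<in>gseries S. \<forall>q\<in>gseries S. f = gs_mult p q \<longrightarrow> gs_unit S p \<or> gs_unit S q)"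

definition sum_of_at_most_irreds ::
    "'a::idom set \<Rightarrow> nat \<Rightarrow> ('g::linordered_ab_group_add \<Rightarrow> 'a) \<Rightarrow> bool" where
  "sum_of_at_most_irreds S n f \<longleftrightarrow>
     (\<exists>k fs. k \<le> n \<and> (\<forall>i<k. gs_irreducible S (fs i)) \<and> f = (\<lambda>g. \<Sum>i<k. fs i g))"

definition supp_gt1 :: "('g \<Rightarrow> 'a::zero) \<Rightarrow> bool" where
  "supp_gt1 f \<longleftrightarrow> (\<exists>a b. a \<noteq> b \<and> a \<in> gsupp f \<and> b \<in> gsupp f)"

end

theory Submission
  imports Defs
begin

(* Suppose every additive atom of S is a unit, and let g0 < g0 + d be the two least exponents
   of f.  An element h of S[[G]] is irreducible as soon as it has a unit coefficient, its two
   least exponents are m0 < m0 + d, and no exponent x > m0 has x + d in its support, except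
   x = m0 + d with an atom as coefficient: in a product of two non-monomials, the two least
   exponents of the factors produce such a pair.  Sorting the remaining exponents of f by the
   parity of the length of their d-chains, and splitting one or two coefficients as
   unit + rest by the Furstenberg property, writes f as a sum of at most two such elements.

   Conversely, the Furstenberg property makes every unit an atom, so otherwise some atom a is
   not a unit, and a (x^g_1 + ... + x^g_(n+2)) is not a sum of n irreducibles: as a is an
   atom, each exponent lies in the support of exactly one summand, with coefficient a; but an
   irreducible all of whose coefficients are a is a times a series with coefficients 0 and 1,
   hence a monomial. *)

locale reduced_semidomain =
  fixes S :: "'a::idom set"
  assumes semidomain: "semidomain S" and additively_reduced: "additively_reduced S"
begin

lemma zero_mem: "0 \<in> S" and one_mem: "1 \<in> S"
  and add_mem: "a \<in> S \<Longrightarrow> b \<in> S \<Longrightarrow> a + b \<in> S"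
  and mult_mem: "a \<in> S \<Longrightarrow> b \<in> S \<Longrightarrow> a * b \<in> S"
  using semidomain unfolding semidomain_def by auto

lemma sum_mem: "(\<And>i. i \<in> I \<Longrightarrow> f i \<in> S) \<Longrightarrow> sum f I \<in> S"
  by (induction I rule: infinite_finite_induct) (simp_all add: zero_mem add_mem)

lemma add_eq_0_left: "a \<in> S \<Longrightarrow> b \<in> S \<Longrightarrow> a + b = 0 \<Longrightarrow> a = 0"
  using additively_reduced unfolding additively_reduced_def by blast

lemma sum_neq_0:
  assumes "finite I" "\<And>i. i \<in> I \<Longrightarrow> f i \<in> S" "i \<in> I" "f i \<noteq> 0"
  shows "sum f I \<noteq> 0"
proof
  assume "sum f I = 0"
  moreover have "sum f I = f i + sum f (I - {i})"
    using assms by (simp add: sum.remove)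
  moreover have "sum f (I - {i}) \<in> S" using assms by (intro sum_mem) auto
  ultimately show False using add_eq_0_left[of "f i"] assms by auto
qed

lemma atom_sum_summand_unique:
  assumes "finite I" "\<And>i. i \<in> I \<Longrightarrow> f i \<in> S" "sum f I \<in> additive_atoms S"
    and "i \<in> I" "j \<in> I" "f i \<noteq> 0" "f j \<noteq> 0"
  shows "i = j"
proof (rule ccontr)
  assume "i \<noteq> j"
  then have "sum f (I - {i}) \<noteq> 0"
    using assms by (intro sum_neq_0[of _ _ j]) auto
  moreover have "sum f I = f i + sum f (I - {i})"
    using assms by (simp add: sum.remove)
  moreover have "f i \<in> S" "sum f (I - {i}) \<in> S" using assms by (auto intro: sum_mem)
  ultimately show False using assms(3,6) unfolding additive_atoms_def by blast
qed

lemma atom_sum_eq_summand: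
  assumes "finite I" "\<And>i. i \<in> I \<Longrightarrow> f i \<in> S" "sum f I \<in> additive_atoms S"
    and "i \<in> I" "f i \<noteq> 0"
  shows "f i = sum f I"
proof -
  have "sum f (I - {i}) = 0"
    using atom_sum_summand_unique[OF assms(1-4)] assms(5) by (intro sum.neutral) blast
  then show ?thesis using assms by (simp add: sum.remove)
qed

lemma sd_units_mem: "u \<in> sd_units S \<Longrightarrow> u \<in> S \<and> u \<noteq> 0"
  unfolding sd_units_def by auto

lemma sd_units_factor:
  assumes "s \<in> S" "r \<in> S" "s * r \<in> sd_units S"
  shows "s \<in> sd_units S"
proof -
  obtain w where w: "w \<in> S" "w \<noteq> 0" "s * r * w = 1"
    using assms(3) unfolding sd_units_def by auto
  then have "r * w \<in> S" "r * w \<noteq> 0" "s * (r * w) = 1" "s \<noteq> 0"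
    using assms by (auto simp: mult_mem mult.assoc)
  then show ?thesis using assms unfolding sd_units_def by blast
qed

end

definition well_ordered :: "'g::ord set \<Rightarrow> bool" where
  "well_ordered T \<longleftrightarrow> (\<forall>A. A \<subseteq> T \<longrightarrow> A \<noteq> {} \<longrightarrow> (\<exists>m\<in>A. \<forall>x\<in>A. m \<le> x))"

lemma well_orderedE:
  assumes "well_ordered T" "A \<subseteq> T" "A \<noteq> {}"
  obtains m where "m \<in> A" "\<And>x. x \<in> A \<Longrightarrow> m \<le> x"
proof -
  have "\<exists>m\<in>A. \<forall>x\<in>A. m \<le> x" using assms unfolding well_ordered_def by blast
  then show thesis using that by blast
qed

lemma well_ordered_subset: "well_ordered T \<Longrightarrow> A \<subseteq> T \<Longrightarrow> well_ordered A"
  unfolding well_ordered_def by blast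

lemma gseries_coeff_mem: "f \<in> gseries S \<Longrightarrow> f g \<in> S"
  unfolding gseries_def by auto

lemma gseries_if_finite_supp:
  "(\<And>x. h x \<in> S) \<Longrightarrow> finite (gsupp h) \<Longrightarrow> h \<in> gseries S"
  unfolding gseries_def by auto

lemma gseries_if_subsupp:
  assumes "f \<in> gseries S" "\<And>x. h x \<in> S" "\<And>x. h x \<noteq> 0 \<Longrightarrow> f x \<noteq> 0"
  shows "h \<in> gseries S"
proof -
  have "gsupp h \<subseteq> gsupp f" using assms unfolding gsupp_def by auto
  then show ?thesis using assms finite_subset unfolding gseries_def by blast
qed

lemma well_ordered_gsupp:
  fixes f :: "'g::linordered_ab_group_add \<Rightarrow> 'a::idom"
  assumes "f \<in> gseries S"
  shows "well_ordered (gsupp f)"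
  unfolding well_ordered_def
proof (intro allI impI)
  fix A assume A: "A \<subseteq> gsupp f" "A \<noteq> {}"
  show "\<exists>m\<in>A. \<forall>x\<in>A. m \<le> x"
  proof (cases "finite (gsupp f)")
    case True
    then have "finite A" using A finite_subset by blast
    then show ?thesis using A by (intro bexI[of _ "Min A"]) auto
  next
    case False
    then obtain e :: "nat \<Rightarrow> 'g" where e: "strict_mono e" "gsupp f \<subseteq> range e"
      using assms unfolding gseries_def by auto
    then obtain n where "e n \<in> A" using A by blast
    define n0 where "n0 = (LEAST n. e n \<in> A)"
    have n0: "e n0 \<in> A" unfolding n0_def by (rule LeastI) fact
    have "e n0 \<le> y" if "y \<in> A" for y
    proof -
      obtain m where m: "y = e m" using e A \<open>y \<in> A\<close> by blast
      then have "n0 \<le> m" unfolding n0_def using \<open>y \<in> A\<close> by (intro Least_le) simp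
      then show ?thesis using m e(1) by (simp add: strict_mono_less_eq)
    qed
    then show ?thesis using n0 by blast
  qed
qed

text \<open>Infinitely many such \<open>a\<close> would make \<open>g - a\<close> range over a subset of the support of
  \<open>q\<close> without least element.\<close>
lemma finite_convolution_indices:
  fixes p q :: "'g::linordered_ab_group_add \<Rightarrow> 'a::idom"
  assumes p: "p \<in> gseries S" and q: "q \<in> gseries S"
  shows "finite {a. p a \<noteq> 0 \<and> q (g - a) \<noteq> 0}" (is "finite ?I")
proof (rule ccontr)
  assume inf: "infinite ?I"
  have I1: "?I \<subseteq> gsupp p" and I2: "(\<lambda>a. g - a) ` ?I \<subseteq> gsupp q"
    unfolding gsupp_def by auto
  then have "infinite (gsupp p)" using inf finite_subset by blast
  then obtain e :: "nat \<Rightarrow> 'g" where e: "strict_mono e" "gsupp p \<subseteq> range e"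
    using p unfolding gseries_def by auto
  have larger: "\<exists>a'\<in>?I. a < a'" if a: "a \<in> ?I" for a
  proof -
    obtain k where k: "a = e k" using a I1 e(2) by blast
    have "{a' \<in> ?I. a' \<le> a} \<subseteq> e ` {..k}"
    proof
      fix x assume x: "x \<in> {a' \<in> ?I. a' \<le> a}"
      then obtain n where "x = e n" using I1 e(2) by blast
      then show "x \<in> e ` {..k}" using x k e(1) by (simp add: strict_mono_less_eq)
    qed
    then have "finite {a' \<in> ?I. a' \<le> a}" using finite_subset by blast
    then have "\<not> ?I \<subseteq> {a' \<in> ?I. a' \<le> a}" using inf finite_subset by blast
    then obtain a' where "a' \<in> ?I" "\<not> a' \<le> a" by blast
    then show ?thesis by (auto simp: not_le)
  qed
  have "?I \<noteq> {}" using inf by (metis finite.emptyI)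
  then have "(\<lambda>a. g - a) ` ?I \<noteq> {}" by blast
  then obtain m where m: "m \<in> (\<lambda>a. g - a) ` ?I" "\<And>x. x \<in> (\<lambda>a. g - a) ` ?I \<Longrightarrow> m \<le> x"
    using well_orderedE[OF well_ordered_gsupp[OF q] I2] by blast
  then obtain a where a: "a \<in> ?I" "m = g - a" by blast
  then obtain a' where a': "a' \<in> ?I" "a < a'" using larger by blast
  then have "g - a \<le> g - a'" using m(2) a(2) by blast
  then show False using a'(2) by simp
qed

lemma gs_mult_commute: "gs_mult p q = gs_mult q p"
proof
  fix g
  show "gs_mult p q g = gs_mult q p g"
    unfolding gs_mult_def
    by (rule sum.reindex_bij_witness[of _ "\<lambda>b. g - b" "\<lambda>a. g - a"]) (auto simp: mult.commute)
qed

lemma gs_mult_nonzero_imp_sum: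
  assumes "gs_mult p q g \<noteq> 0"
  obtains a b where "p a \<noteq> 0" "q b \<noteq> 0" "g = a + b"
proof -
  have "{a. p a \<noteq> 0 \<and> q (g - a) \<noteq> 0} \<noteq> {}"
  proof
    assume E: "{a. p a \<noteq> 0 \<and> q (g - a) \<noteq> 0} = {}"
    have "gs_mult p q g = 0" unfolding gs_mult_def E by simp
    with assms show False by simp
  qed
  then obtain a where "p a \<noteq> 0" "q (g - a) \<noteq> 0" by blast
  then show ?thesis using that[of a "g - a"] by simp
qed

definition gs_monom :: "'g \<Rightarrow> 'a::zero \<Rightarrow> 'g \<Rightarrow> 'a" where
  "gs_monom b s = (\<lambda>x. if x = b then s else 0)"

lemma gs_monom_eq: "(\<And>x. x \<noteq> b \<Longrightarrow> p x = 0) \<Longrightarrow> p = gs_monom b (p b)"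
  unfolding gs_monom_def by auto

lemma gs_mult_monom: "gs_mult (gs_monom b s) q g = s * q (g - b)"
proof (cases "s \<noteq> 0 \<and> q (g - b) \<noteq> 0")
  case True
  then have "{a. gs_monom b s a \<noteq> 0 \<and> q (g - a) \<noteq> 0} = {b}"
    unfolding gs_monom_def by auto
  then show ?thesis unfolding gs_mult_def by (simp add: gs_monom_def)
next
  case False
  then have "{a. gs_monom b s a \<noteq> 0 \<and> q (g - a) \<noteq> 0} = {}"
    unfolding gs_monom_def by auto
  then show ?thesis using False unfolding gs_mult_def by (metis mult_eq_0_iff sum.empty)
qed

context reduced_semidomain
begin

lemma gs_monom_mem: "s \<in> S \<Longrightarrow> gs_monom b s \<in> gseries S"
  by (rule gseries_if_finite_supp)
    (auto simp: zero_mem gs_monom_def gsupp_def intro: finite_subset[of _ "{b}"])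

lemma gs_unit_monom_iff:
  assumes "s \<in> S"
  shows "gs_unit S (gs_monom b s) \<longleftrightarrow> s \<in> sd_units S"
proof
  assume "gs_unit S (gs_monom b s)"
  then obtain v where v: "v \<in> gseries S" "gs_mult (gs_monom b s) v = gs_one"
    unfolding gs_unit_def by auto
  then have "s * v (- b) = 1"
    using gs_mult_monom[of b s v 0] by (simp add: gs_one_def)
  then show "s \<in> sd_units S"
    using assms gseries_coeff_mem[OF v(1)] unfolding sd_units_def by force
next
  assume "s \<in> sd_units S"
  then obtain s' where s': "s' \<in> S" "s * s' = 1" unfolding sd_units_def by auto
  have "gs_mult (gs_monom b s) (gs_monom (- b) s') g = gs_one g" for g
    unfolding gs_mult_monom using s' by (simp add: gs_monom_def gs_one_def)
  then have "gs_mult (gs_monom b s) (gs_monom (- b) s') = gs_one" ..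
  then show "gs_unit S (gs_monom b s)"
    unfolding gs_unit_def using assms s' by (blast intro: gs_monom_mem)
qed

lemma gs_mult_nonzero:
  assumes p: "p \<in> gseries S" and q: "q \<in> gseries S" and "p a \<noteq> 0" "q b \<noteq> 0"
  shows "gs_mult p q (a + b) \<noteq> 0"
  unfolding gs_mult_def
  using assms finite_convolution_indices[OF p q]
  by (intro sum_neq_0[of _ _ a]) (auto simp: gseries_coeff_mem mult_mem)

lemma not_gs_unit_two_supp:
  assumes h: "h \<in> gseries S" and "h x \<noteq> 0" "h y \<noteq> 0" "x \<noteq> y"
  shows "\<not> gs_unit S h"
proof
  assume "gs_unit S h"
  then obtain v where v: "v \<in> gseries S" "gs_mult h v = gs_one" unfolding gs_unit_def by auto
  have "gs_mult h v 0 \<noteq> 0" using v(2) by (simp add: gs_one_def)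
  then obtain b where b: "v b \<noteq> 0" by (rule gs_mult_nonzero_imp_sum)
  have "gs_mult h v (x + b) \<noteq> 0" "gs_mult h v (y + b) \<noteq> 0"
    using gs_mult_nonzero[OF h v(1)] assms b by auto
  then have "x + b = 0" "y + b = 0" using v unfolding gs_one_def by (auto split: if_splits)
  then show False using assms by (metis add_right_cancel)
qed

lemma gs_unit_if_monomial_factor:
  assumes p: "p \<in> gseries S" and q: "q \<in> gseries S" and "\<And>x. x \<noteq> a \<Longrightarrow> p x = 0"
    and "gs_mult p q c \<in> sd_units S"
  shows "gs_unit S p"
proof -
  have p_eq: "p = gs_monom a (p a)" by (rule gs_monom_eq) fact
  then have "p a * q (c - a) \<in> sd_units S" using assms(4) gs_mult_monom by metis
  then have "p a \<in> sd_units S" using sd_units_factor p q gseries_coeff_mem by blast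
  then show ?thesis using p_eq gs_unit_monom_iff gseries_coeff_mem[OF p] by metis
qed

end

section \<open>An irreducibility criterion\<close>

definition least_two_supp :: "('g::linorder \<Rightarrow> 'a::zero) \<Rightarrow> 'g \<Rightarrow> 'g \<Rightarrow> bool" where
  "least_two_supp h m0 m1 \<longleftrightarrow>
     m0 < m1 \<and> h m0 \<noteq> 0 \<and> h m1 \<noteq> 0 \<and> (\<forall>x. h x \<noteq> 0 \<longrightarrow> x = m0 \<or> m1 \<le> x)"

lemma least_two_supp_least: "least_two_supp h m0 m1 \<Longrightarrow> h x \<noteq> 0 \<Longrightarrow> m0 \<le> x"
  unfolding least_two_supp_def by force

lemma least_two_supp_unique:
  assumes "least_two_supp h m0 m1" "least_two_supp h m0' m1'"
  shows "m0' = m0" "m1' = m1"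
proof -
  show "m0' = m0"
    using least_two_supp_least[OF assms(1), of m0'] least_two_supp_least[OF assms(2), of m0] assms
    unfolding least_two_supp_def by auto
  then show "m1' = m1"
    using assms unfolding least_two_supp_def by (metis antisym less_irrefl)
qed

lemma gseries_least_two_supp:
  fixes f :: "'g::linordered_ab_group_add \<Rightarrow> 'a::idom"
  assumes f: "f \<in> gseries S" and "f x \<noteq> 0" "f y \<noteq> 0" "x \<noteq> y"
  obtains m0 m1 where "least_two_supp f m0 m1"
proof -
  have wo: "well_ordered (gsupp f)" by (rule well_ordered_gsupp[OF f])
  obtain m0 where m0: "m0 \<in> gsupp f" "\<And>z. z \<in> gsupp f \<Longrightarrow> m0 \<le> z"
    using well_orderedE[OF wo, of "gsupp f"] assms unfolding gsupp_def by blast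
  have "gsupp f - {m0} \<noteq> {}" using assms unfolding gsupp_def by auto
  then obtain m1 where m1: "m1 \<in> gsupp f - {m0}" "\<And>z. z \<in> gsupp f - {m0} \<Longrightarrow> m1 \<le> z"
    using well_orderedE[OF wo, of "gsupp f - {m0}"] by blast
  have "m0 < m1" using m0 m1 by force
  then have "least_two_supp f m0 m1"
    using m0 m1 unfolding least_two_supp_def gsupp_def by blast
  then show ?thesis by (rule that)
qed

context reduced_semidomain
begin

lemma least_two_supp_gs_mult:
  assumes p: "p \<in> gseries S" and q: "q \<in> gseries S"
    and a: "least_two_supp p a0 a1" and b: "least_two_supp q b0 b1"
    and le: "a1 + b0 \<le> a0 + b1"
  shows "least_two_supp (gs_mult p q) (a0 + b0) (a1 + b0)"
  unfolding least_two_supp_def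
proof (intro conjI allI impI)
  show "a0 + b0 < a1 + b0" using a unfolding least_two_supp_def by simp
  show "gs_mult p q (a0 + b0) \<noteq> 0" "gs_mult p q (a1 + b0) \<noteq> 0"
    using a b gs_mult_nonzero[OF p q] unfolding least_two_supp_def by auto
next
  fix x assume "gs_mult p q x \<noteq> 0"
  then obtain a' b' where ab: "p a' \<noteq> 0" "q b' \<noteq> 0" "x = a' + b'"
    by (rule gs_mult_nonzero_imp_sum)
  have "b0 \<le> b'" using least_two_supp_least[OF b ab(2)] .
  show "x = a0 + b0 \<or> a1 + b0 \<le> x"
  proof (cases "a' = a0")
    case True
    show ?thesis
    proof (cases "b' = b0")
      case False
      then have "b1 \<le> b'" using b ab(2) unfolding least_two_supp_def by blast
      then show ?thesis using le ab(3) True by (metis add_left_mono order_trans)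
    qed (use True ab in simp)
  next
    case False
    then have "a1 \<le> a'" using a ab(1) unfolding least_two_supp_def by blast
    then show ?thesis using \<open>b0 \<le> b'\<close> ab(3) by (simp add: add_mono)
  qed
qed

lemma gs_mult_coeff_not_atom:
  assumes p: "p \<in> gseries S" and q: "q \<in> gseries S"
    and "p a0 \<noteq> 0" "p a1 \<noteq> 0" "q b0 \<noteq> 0" "q b1 \<noteq> 0" "a0 \<noteq> a1" "a0 + b1 = a1 + b0"
  shows "gs_mult p q (a1 + b0) \<notin> additive_atoms S"
proof
  let ?I = "{a. p a \<noteq> 0 \<and> q (a1 + b0 - a) \<noteq> 0}"
  assume "gs_mult p q (a1 + b0) \<in> additive_atoms S"
  then have "(\<Sum>a\<in>?I. p a * q (a1 + b0 - a)) \<in> additive_atoms S" unfolding gs_mult_def .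
  moreover have "a1 + b0 - a0 = b1" using assms(8) by (metis add_diff_cancel_left')
  moreover have "p a * q (a1 + b0 - a) \<in> S" for a
    using p q by (simp add: gseries_coeff_mem mult_mem)
  ultimately have "a0 = a1"
    using atom_sum_summand_unique[OF finite_convolution_indices[OF p q],
        of "a1 + b0" "\<lambda>a. p a * q (a1 + b0 - a)" a0 a1] assms
    by auto
  then show False using assms(7) by simp
qed

lemma gs_mult_violates_free:
  assumes p: "p \<in> gseries S" and q: "q \<in> gseries S"
    and a: "least_two_supp p a0 a1" and b: "least_two_supp q b0 b1"
    and le: "a1 + b0 \<le> a0 + b1"
    and hpq: "h = gs_mult p q" and h: "least_two_supp h m0 (m0 + d)"
  shows "\<exists>x. h x \<noteq> 0 \<and> m0 < x \<and> h (x + d) \<noteq> 0 \<and>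
    (x = m0 + d \<longrightarrow> h (m0 + d) \<notin> additive_atoms S)"
  unfolding hpq
proof (intro exI conjI impI)
  have m: "m0 = a0 + b0" "m0 + d = a1 + b0"
    using least_two_supp_unique[OF least_two_supp_gs_mult[OF p q a b le] h[unfolded hpq]]
    by simp_all
  then have "b0 + (a0 + d) = b0 + a1" by (simp add: ac_simps)
  then have d: "a0 + d = a1" by simp
  have nz: "p a0 \<noteq> 0" "p a1 \<noteq> 0" "q b0 \<noteq> 0" "q b1 \<noteq> 0" "a0 < a1" "b0 < b1"
    using a b unfolding least_two_supp_def by auto
  show "gs_mult p q (a0 + b1) \<noteq> 0" using gs_mult_nonzero[OF p q] nz by blast
  show "m0 < a0 + b1" using m nz by simp
  have "a0 + b1 + d = (a0 + d) + b1" by (simp add: ac_simps)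
  also have "\<dots> = a1 + b1" using d by simp
  finally have shift: "a0 + b1 + d = a1 + b1" .
  show "gs_mult p q (a0 + b1 + d) \<noteq> 0" unfolding shift by (rule gs_mult_nonzero[OF p q nz(2,4)])
  show "gs_mult p q (m0 + d) \<notin> additive_atoms S" if "a0 + b1 = m0 + d"
    unfolding m(2) using nz(5) that m(2) by (intro gs_mult_coeff_not_atom[OF p q nz(1-4)]) simp_all
qed

lemma least_two_supp_nonunit_factor:
  assumes r: "r \<in> gseries S" and r': "r' \<in> gseries S" and unit: "gs_mult r r' c \<in> sd_units S"
    and "\<not> gs_unit S r"
  obtains a0 a1 where "least_two_supp r a0 a1"
proof -
  have "gs_mult r r' c \<noteq> 0" using sd_units_mem[OF unit] by blast
  then obtain x where x: "r x \<noteq> 0" by (rule gs_mult_nonzero_imp_sum)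
  have "\<not> (\<forall>y. y \<noteq> x \<longrightarrow> r y = 0)"
    using gs_unit_if_monomial_factor[OF r r', of x c] unit assms(4) by blast
  then obtain y where "r y \<noteq> 0" "x \<noteq> y" by blast
  then show ?thesis using that gseries_least_two_supp[OF r x] by blast
qed

lemma gs_irreducible_criterion:
  assumes h: "h \<in> gseries S" and two: "least_two_supp h m0 (m0 + d)"
    and unit: "h c \<in> sd_units S"
    and free: "\<And>x. h x \<noteq> 0 \<Longrightarrow> m0 < x \<Longrightarrow> h (x + d) \<noteq> 0 \<Longrightarrow>
                 x = m0 + d \<and> h (m0 + d) \<in> additive_atoms S"
  shows "gs_irreducible S h"
  unfolding gs_irreducible_def
proof (intro conjI ballI impI)
  have nz: "h m0 \<noteq> 0" "h (m0 + d) \<noteq> 0" "m0 \<noteq> m0 + d"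
    using two unfolding least_two_supp_def by auto
  show "h \<in> gseries S" by fact
  show "h \<noteq> gs_zero" using nz unfolding gs_zero_def by auto
  show "\<not> gs_unit S h" using not_gs_unit_two_supp[OF h nz] .
next
  fix p q assume p: "p \<in> gseries S" and q: "q \<in> gseries S" and hpq: "h = gs_mult p q"
  show "gs_unit S p \<or> gs_unit S q"
  proof (rule ccontr)
    assume nu: "\<not> ?thesis"
    have hqp: "h = gs_mult q p" using hpq gs_mult_commute by metis
    obtain a0 a1 where a: "least_two_supp p a0 a1"
      using least_two_supp_nonunit_factor[OF p q unit[unfolded hpq]] nu by blast
    obtain b0 b1 where b: "least_two_supp q b0 b1"
      using least_two_supp_nonunit_factor[OF q p unit[unfolded hqp]] nu by blast
    have "\<exists>x. h x \<noteq> 0 \<and> m0 < x \<and> h (x + d) \<noteq> 0 \<and>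
        (x = m0 + d \<longrightarrow> h (m0 + d) \<notin> additive_atoms S)"
    proof (cases "a1 + b0 \<le> a0 + b1")
      case True
      then show ?thesis by (rule gs_mult_violates_free[OF p q a b _ hpq two])
    next
      case False
      then have "b1 + a0 \<le> b0 + a1" by (simp add: add.commute)
      then show ?thesis by (rule gs_mult_violates_free[OF q p b a _ hqp two])
    qed
    then show False using free by blast
  qed
qed

end

section \<open>Sums of two irreducibles\<close>

text \<open>If \<open>x\<close> and \<open>x + d\<close> both lie in \<open>T\<close>, their depths have different parity; hence neither
  parity class of \<open>T\<close> contains two exponents at distance \<open>d\<close>.\<close>
definition chain_depth :: "'g::ab_group_add set \<Rightarrow> 'g \<Rightarrow> 'g \<Rightarrow> nat" where
  "chain_depth T d x = (LEAST j. ((\<lambda>y. y - d) ^^ Suc j) x \<notin> T)"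

lemma chain_leaves_well_ordered:
  fixes T :: "'g::linordered_ab_group_add set"
  assumes T: "well_ordered T" and d: "0 < d"
  shows "\<exists>j. ((\<lambda>y. y - d) ^^ Suc j) x \<notin> T"
proof (rule ccontr)
  let ?chain = "range (\<lambda>j. ((\<lambda>y. y - d) ^^ Suc j) x)"
  assume "\<not> ?thesis"
  then have "?chain \<subseteq> T" by auto
  moreover have "?chain \<noteq> {}" by simp
  ultimately have "\<exists>m\<in>?chain. \<forall>z\<in>?chain. m \<le> z"
    using T unfolding well_ordered_def by blast
  then obtain j where j: "\<forall>z\<in>?chain. ((\<lambda>y. y - d) ^^ Suc j) x \<le> z" by blast
  have "((\<lambda>y. y - d) ^^ Suc j) x \<le> ((\<lambda>y. y - d) ^^ Suc (Suc j)) x"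
    using j by blast
  also have "\<dots> = ((\<lambda>y. y - d) ^^ Suc j) x - d" by simp
  finally have "d \<le> 0" by (simp add: le_diff_eq)
  then show False using d by simp
qed

lemma chain_depth_add:
  fixes T :: "'g::linordered_ab_group_add set"
  assumes T: "well_ordered T" and d: "0 < d" and x: "x \<in> T"
  shows "chain_depth T d (x + d) = Suc (chain_depth T d x)"
proof -
  have "chain_depth T d (x + d) = (LEAST j. ((\<lambda>y. y - d) ^^ j) x \<notin> T)"
    unfolding chain_depth_def funpow_Suc_right by simp
  also have "\<dots> = Suc (LEAST j. ((\<lambda>y. y - d) ^^ Suc j) x \<notin> T)"
  proof -
    obtain n where "((\<lambda>y. y - d) ^^ Suc n) x \<notin> T" using chain_leaves_well_ordered[OF T d] ..
    moreover have "\<not> ((\<lambda>y. y - d) ^^ 0) x \<notin> T" using x by simp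
    ultimately show ?thesis by (rule Least_Suc)
  qed
  finally show ?thesis unfolding chain_depth_def .
qed

lemma chain_depth_eq_0: "x - d \<notin> T \<Longrightarrow> chain_depth T d x = 0"
  unfolding chain_depth_def by (rule Least_eq_0) simp

lemma odd_chain_depth_pred:
  fixes T :: "'g::linordered_ab_group_add set"
  assumes T: "well_ordered T" and d: "0 < d" and odd: "odd (chain_depth T d x)"
  shows "x - d \<in> T" "even (chain_depth T d (x - d))"
proof -
  show xd: "x - d \<in> T"
  proof (rule ccontr)
    assume "x - d \<notin> T"
    then have "chain_depth T d x = 0" by (rule chain_depth_eq_0)
    then show False using odd by simp
  qed
  show "even (chain_depth T d (x - d))" using chain_depth_add[OF T d xd] odd by simp
qed

context reduced_semidomain
begin

lemma gs_irreducible_parity_part: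
  assumes T: "well_ordered T" and d: "0 < d"
    and g0: "g0 \<notin> T" "\<And>x. x \<in> T \<Longrightarrow> g0 + d \<le> x"
    and h: "h \<in> gseries S" "h g0 \<noteq> 0" "h (g0 + d) \<noteq> 0" and unit: "h c \<in> sd_units S"
    and supp: "\<And>x. h x \<noteq> 0 \<Longrightarrow> x = g0 \<or> x = g0 + d \<or> (x \<in> T \<and> even (chain_depth T d x) = b)"
    and head: "h (g0 + d) \<in> additive_atoms S \<or> (g0 + d \<in> T \<longleftrightarrow> b)"
  shows "gs_irreducible S h"
proof (rule gs_irreducible_criterion[OF h(1) _ unit])
  show "least_two_supp h g0 (g0 + d)"
    unfolding least_two_supp_def using h(2,3) d supp g0(2) by auto
  show "x = g0 + d \<and> h (g0 + d) \<in> additive_atoms S"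
    if hx: "h x \<noteq> 0" and lt: "g0 < x" and hxd: "h (x + d) \<noteq> 0" for x
  proof -
    have "g0 + d < x + d" using lt by simp
    then have xd: "x + d \<in> T" "even (chain_depth T d (x + d)) = b"
      using supp[OF hxd] d by (auto simp: add.commute)
    consider "x = g0 + d" | "x \<in> T" "even (chain_depth T d x) = b"
      using supp[OF hx] lt by blast
    then show ?thesis
    proof cases
      case 1
      have "chain_depth T d (x + d) = (if g0 + d \<in> T then 1 else 0)"
        using 1 g0(1) chain_depth_add[OF T d] chain_depth_eq_0[of "g0 + d" d T]
          chain_depth_eq_0[of "x + d" d T] by auto
      then show ?thesis using 1 head xd by (auto split: if_splits)
    next
      case 2
      then show ?thesis using chain_depth_add[OF T d] xd by simp
    qed
  qed
qed

lemma gs_irreducible_odd_part: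
  assumes f: "f \<in> gseries S" and T: "T \<subseteq> gsupp f" and d: "0 < d"
    and o0: "o0 \<in> T" "odd (chain_depth T d o0)"
    and o0_least: "\<And>x. x \<in> T \<Longrightarrow> odd (chain_depth T d x) \<Longrightarrow> o0 \<le> x"
    and u: "u \<in> sd_units S"
  shows "gs_irreducible S
    (\<lambda>x. if x = o0 - d then u else if x \<in> T \<and> odd (chain_depth T d x) then f x else 0)"
    (is "gs_irreducible S ?Y")
proof -
  have wo: "well_ordered T" using well_ordered_subset[OF well_ordered_gsupp[OF f] T] .
  have pred: "o0 - d \<in> T" using odd_chain_depth_pred[OF wo d o0(2)] by simp
  have u_mem: "u \<in> S" "u \<noteq> 0" using sd_units_mem[OF u] by auto
  have fT: "f x \<noteq> 0" if "x \<in> T" for x using that T unfolding gsupp_def by auto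
  have Y: "?Y \<in> gseries S"
    by (rule gseries_if_subsupp[OF f])
      (use u_mem gseries_coeff_mem[OF f] zero_mem fT pred in \<open>auto split: if_splits\<close>)
  show ?thesis
  proof (rule gs_irreducible_criterion[OF Y, of "o0 - d" d "o0 - d"])
    show "least_two_supp ?Y (o0 - d) (o0 - d + d)"
      unfolding least_two_supp_def using d u_mem fT o0 o0_least by auto
    show "?Y (o0 - d) \<in> sd_units S" using u by simp
    show "x = o0 - d + d \<and> ?Y (o0 - d + d) \<in> additive_atoms S"
      if "?Y x \<noteq> 0" "o0 - d < x" "?Y (x + d) \<noteq> 0" for x
    proof -
      have "x < x + d" using d by simp
      with that(2) have "o0 - d < x + d" by (rule less_trans)
      then have "x \<in> T" "odd (chain_depth T d x)"
        and "x + d \<in> T" "odd (chain_depth T d (x + d))"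
        using that by (auto split: if_splits)
      then show ?thesis using chain_depth_add[OF wo d] by simp
    qed
  qed
qed

end

lemma sum_of_at_most_irreds_mono:
  "sum_of_at_most_irreds S m f \<Longrightarrow> m \<le> n \<Longrightarrow> sum_of_at_most_irreds S n f"
  unfolding sum_of_at_most_irreds_def using le_trans by blast

lemma sum_of_at_most_irreds_single: "gs_irreducible S f \<Longrightarrow> sum_of_at_most_irreds S 1 f"
  unfolding sum_of_at_most_irreds_def by (rule exI[of _ 1], rule exI[of _ "\<lambda>_. f"]) simp

lemma sum_of_at_most_irreds_pair:
  assumes "gs_irreducible S X" "gs_irreducible S Y"
  shows "sum_of_at_most_irreds S 2 (\<lambda>g. X g + Y g)"
  unfolding sum_of_at_most_irreds_def
  using assms by (intro exI[of _ 2] exI[of _ "\<lambda>i. if i = 0 then X else Y"])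
    (auto simp: numeral_2_eq_2 less_Suc_eq)

lemma furstenberg_unit_split:
  assumes "additively_Furstenberg S" "additive_atoms S = sd_units S" "c \<in> S" "c \<noteq> 0"
  obtains u t where "u \<in> sd_units S" "t \<in> S" "c = u + t"
  using assms unfolding additively_Furstenberg_def by blast

context reduced_semidomain
begin

lemma sum_of_two_irreds_split_odd_part:
  assumes fur: "additively_Furstenberg S" and au: "additive_atoms S = sd_units S"
    and f: "f \<in> gseries S" and d: "0 < d"
    and T: "T \<subseteq> gsupp f" "g0 \<notin> T" "\<And>x. x \<in> T \<Longrightarrow> g0 + d \<le> x"
    and cov: "\<And>x. f x \<noteq> 0 \<Longrightarrow> x = g0 \<or> x = g0 + d \<or> x \<in> T"
    and f0: "f g0 \<noteq> 0" and f1: "f (g0 + d) \<noteq> 0"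
    and c: "c \<notin> T" "f c \<in> sd_units S"
    and head: "g0 + d \<in> T \<longleftrightarrow> f (g0 + d) \<notin> sd_units S"
    and o0: "o0 \<in> T" "odd (chain_depth T d o0)"
    and o0_least: "\<And>x. x \<in> T \<Longrightarrow> odd (chain_depth T d x) \<Longrightarrow> o0 \<le> x"
  shows "sum_of_at_most_irreds S 2 f"
proof -
  have wo: "well_ordered T" by (rule well_ordered_subset[OF well_ordered_gsupp[OF f] T(1)])
  have fT: "f x \<noteq> 0" if "x \<in> T" for x using that T(1) unfolding gsupp_def by auto
  have pred: "o0 - d \<in> T" "even (chain_depth T d (o0 - d))"
    using odd_chain_depth_pred[OF wo d o0(2)] by simp_all
  obtain u t where ut: "u \<in> sd_units S" "t \<in> S" "f (o0 - d) = u + t"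
    using furstenberg_unit_split[OF fur au gseries_coeff_mem[OF f] fT[OF pred(1)]] .
  have "u + t \<noteq> 0" using fT[OF pred(1)] ut(3) by simp
  define odd_part where "odd_part x \<longleftrightarrow> x \<in> T \<and> odd (chain_depth T d x)" for x
  define X where "X x = (if x = o0 - d then t else if odd_part x then 0 else f x)" for x
  define Y where "Y x = (if x = o0 - d then u else if odd_part x then f x else 0)" for x
  have head_even: "\<not> odd_part (g0 + d)"
    using chain_depth_eq_0[of "g0 + d" d T] T(2) unfolding odd_part_def by simp
  have X_head: "X (g0 + d) \<noteq> 0 \<and> (X (g0 + d) \<in> additive_atoms S \<or> g0 + d \<in> T)"
  proof (cases "g0 + d = o0 - d")
    case True
    then have "t \<noteq> 0" using head pred ut by auto
    then show ?thesis using True pred unfolding X_def by simp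
  next
    case False
    then show ?thesis using head_even f1 head au unfolding X_def by auto
  qed
  have "gs_irreducible S X"
  proof (rule gs_irreducible_parity_part[OF wo d T(2,3), of X c True])
    show "X \<in> gseries S"
      by (rule gseries_if_subsupp[OF f])
        (use \<open>u + t \<noteq> 0\<close> in \<open>auto simp: X_def ut gseries_coeff_mem[OF f] zero_mem fT pred
          split: if_splits\<close>)
    show "X g0 \<noteq> 0" "X c \<in> sd_units S"
      using T(2) pred c f0 unfolding X_def odd_part_def by auto
    show "x = g0 \<or> x = g0 + d \<or> x \<in> T \<and> even (chain_depth T d x) = True" if "X x \<noteq> 0" for x
      using that cov pred unfolding X_def odd_part_def by (auto split: if_splits)
  qed (use X_head in auto)
  moreover have "gs_irreducible S Y"
    unfolding Y_def odd_part_def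
    by (rule gs_irreducible_odd_part[OF f T(1) d o0 o0_least ut(1)])
  moreover have "f = (\<lambda>x. X x + Y x)" using ut by (auto simp: X_def Y_def)
  ultimately show ?thesis using sum_of_at_most_irreds_pair by metis
qed

lemma sum_of_two_irreds_if_unit_coeff:
  assumes fur: "additively_Furstenberg S" and au: "additive_atoms S = sd_units S"
    and f: "f \<in> gseries S" and d: "0 < d"
    and T: "T \<subseteq> gsupp f" "g0 \<notin> T" "\<And>x. x \<in> T \<Longrightarrow> g0 + d \<le> x"
    and cov: "\<And>x. f x \<noteq> 0 \<Longrightarrow> x = g0 \<or> x = g0 + d \<or> x \<in> T"
    and f0: "f g0 \<noteq> 0" and f1: "f (g0 + d) \<noteq> 0"
    and c: "c \<notin> T" "f c \<in> sd_units S"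
    and head: "g0 + d \<in> T \<longleftrightarrow> f (g0 + d) \<notin> sd_units S"
  shows "sum_of_at_most_irreds S 2 f"
proof (cases "\<exists>x\<in>T. odd (chain_depth T d x)")
  case False
  have wo: "well_ordered T" by (rule well_ordered_subset[OF well_ordered_gsupp[OF f] T(1)])
  have "gs_irreducible S f"
    by (rule gs_irreducible_parity_part[OF wo d T(2,3) f f0 f1 c(2), of True])
      (use cov False head au in auto)
  then have "sum_of_at_most_irreds S 1 f" by (rule sum_of_at_most_irreds_single)
  then show ?thesis by (rule sum_of_at_most_irreds_mono) simp
next
  case True
  have "{x \<in> T. odd (chain_depth T d x)} \<subseteq> gsupp f" using T(1) by blast
  then have "\<exists>o0\<in>{x \<in> T. odd (chain_depth T d x)}. \<forall>x\<in>{x \<in> T. odd (chain_depth T d x)}. o0 \<le> x"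
    using well_ordered_gsupp[OF f] True unfolding well_ordered_def by blast
  then obtain o0 where o0: "o0 \<in> T" "odd (chain_depth T d o0)"
    and o0_least: "\<And>x. x \<in> T \<Longrightarrow> odd (chain_depth T d x) \<Longrightarrow> o0 \<le> x"
    by blast
  show ?thesis
    by (rule sum_of_two_irreds_split_odd_part[OF fur au f d T cov f0 f1 c head o0 o0_least])
qed

lemma sum_of_two_irreds_if_nonunit_head:
  assumes au: "additive_atoms S = sd_units S"
    and f: "f \<in> gseries S" and d: "0 < d"
    and T: "T \<subseteq> gsupp f" "g0 \<notin> T" "g0 + d \<notin> T" "\<And>x. x \<in> T \<Longrightarrow> g0 + d \<le> x"
    and cov: "\<And>x. f x \<noteq> 0 \<Longrightarrow> x = g0 \<or> x = g0 + d \<or> x \<in> T"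
    and u0: "u0 \<in> sd_units S" "t0 \<in> S" "t0 \<noteq> 0" "f g0 = u0 + t0"
    and u1: "u1 \<in> sd_units S" "t1 \<in> S" "t1 \<noteq> 0" "f (g0 + d) = u1 + t1"
  shows "sum_of_at_most_irreds S 2 f"
proof -
  have wo: "well_ordered T" by (rule well_ordered_subset[OF well_ordered_gsupp[OF f] T(1)])
  have g01: "g0 \<noteq> g0 + d" using d by simp
  have u_mem: "u0 \<in> S" "u0 \<noteq> 0" "u1 \<in> S" "u1 \<noteq> 0"
    using sd_units_mem[OF u0(1)] sd_units_mem[OF u1(1)] by auto
  have f_nz: "f g0 \<noteq> 0" "f (g0 + d) \<noteq> 0"
    using u0 u1 u_mem add_eq_0_left by metis+
  define odd_part where "odd_part x \<longleftrightarrow> x \<in> T \<and> odd (chain_depth T d x)" for x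
  define X where "X x = (if x = g0 then t0 else if x = g0 + d then u1
      else if odd_part x then 0 else f x)" for x
  define Y where "Y x = (if x = g0 then u0 else if x = g0 + d then t1
      else if odd_part x then f x else 0)" for x
  have X_mem: "X \<in> gseries S"
    by (rule gseries_if_subsupp[OF f])
      (use u0 u1 u_mem f_nz gseries_coeff_mem[OF f] zero_mem in \<open>auto simp: X_def split: if_splits\<close>)
  have Y_mem: "Y \<in> gseries S"
    by (rule gseries_if_subsupp[OF f])
      (use u0 u1 u_mem f_nz gseries_coeff_mem[OF f] zero_mem in \<open>auto simp: Y_def split: if_splits\<close>)
  have "gs_irreducible S X"
    by (rule gs_irreducible_parity_part[OF wo d T(2,4) X_mem, of "g0 + d" True])
      (use g01 u0 u1 u_mem au cov in \<open>auto simp: X_def odd_part_def split: if_splits\<close>)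
  moreover have "gs_irreducible S Y"
    by (rule gs_irreducible_parity_part[OF wo d T(2,4) Y_mem, of g0 False])
      (use g01 u0 u1 u_mem T(3) in \<open>auto simp: Y_def odd_part_def split: if_splits\<close>)
  moreover have "f = (\<lambda>x. X x + Y x)"
    using u0 u1 g01 by (auto simp: fun_eq_iff X_def Y_def algebra_simps)
  ultimately show ?thesis using sum_of_at_most_irreds_pair by metis
qed

lemma sum_of_at_most_two_irreds:
  assumes fur: "additively_Furstenberg S" and au: "additive_atoms S = sd_units S"
    and f: "f \<in> gseries S" and "supp_gt1 f"
  shows "sum_of_at_most_irreds S 2 f"
proof -
  obtain g0 g1 where two: "least_two_supp f g0 g1"
    using assms(4) gseries_least_two_supp[OF f] unfolding supp_gt1_def gsupp_def by blast
  define d where "d = g1 - g0"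
  have d: "0 < d" and f0: "f g0 \<noteq> 0" and f1: "f (g0 + d) \<noteq> 0"
    and above: "\<And>x. f x \<noteq> 0 \<Longrightarrow> x \<noteq> g0 \<Longrightarrow> g0 + d \<le> x"
    using two unfolding least_two_supp_def d_def by auto
  have g01: "g0 \<noteq> g0 + d" using d by simp
  consider "f (g0 + d) \<in> sd_units S" | "f g0 \<in> sd_units S" "f (g0 + d) \<notin> sd_units S"
    | "f g0 \<notin> sd_units S" "f (g0 + d) \<notin> sd_units S" by blast
  then show ?thesis
  proof cases
    case 1
    show ?thesis
      by (rule sum_of_two_irreds_if_unit_coeff[OF fur au f d, of "gsupp f - {g0, g0 + d}" g0 "g0 + d"])
        (use above f0 f1 1 in \<open>auto simp: gsupp_def\<close>)
  next
    case 2
    show ?thesis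
      by (rule sum_of_two_irreds_if_unit_coeff[OF fur au f d, of "gsupp f - {g0}" g0 g0])
        (use above f0 f1 g01 2 in \<open>auto simp: gsupp_def\<close>)
  next
    case 3
    obtain u0 t0 where ut0: "u0 \<in> sd_units S" "t0 \<in> S" "f g0 = u0 + t0"
      using furstenberg_unit_split[OF fur au gseries_coeff_mem[OF f] f0] .
    obtain u1 t1 where ut1: "u1 \<in> sd_units S" "t1 \<in> S" "f (g0 + d) = u1 + t1"
      using furstenberg_unit_split[OF fur au gseries_coeff_mem[OF f] f1] .
    have "t0 \<noteq> 0" "t1 \<noteq> 0" using ut0 ut1 3 by auto
    then show ?thesis
      using ut0 ut1 above
      by (intro sum_of_two_irreds_if_nonunit_head[OF au f d, of "gsupp f - {g0, g0 + d}"])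
        (auto simp: gsupp_def)
  qed
qed

end

section \<open>Elements that need many irreducible summands\<close>

lemma infinite_UNIV_if_nonzero:
  fixes g :: "'g::linordered_ab_group_add"
  assumes "g \<noteq> 0"
  shows "infinite (UNIV :: 'g set)"
proof -
  obtain g' :: 'g where g': "0 < g'"
    using assms by (metis neg_0_less_iff_less linorder_neqE)
  have "strict_mono (\<lambda>n. ((+) g' ^^ n) 0)"
    unfolding strict_mono_Suc_iff using g' by simp
  then have inj: "inj (\<lambda>n. ((+) g' ^^ n) 0)" by (rule strict_mono_imp_inj_on)
  show ?thesis
  proof
    assume "finite (UNIV :: 'g set)"
    then have "finite (range (\<lambda>n. ((+) g' ^^ n) 0))" by (rule finite_subset[rotated]) simp
    then have "finite (UNIV :: nat set)" using inj by (rule finite_imageD)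
    then show False by simp
  qed
qed

context reduced_semidomain
begin

lemma sd_units_subset_additive_atoms:
  assumes fur: "additively_Furstenberg S"
  shows "sd_units S \<subseteq> additive_atoms S"
proof
  fix v assume v: "v \<in> sd_units S"
  show "v \<in> additive_atoms S"
  proof (rule ccontr)
    assume "v \<notin> additive_atoms S"
    then obtain b c where bc: "b \<in> S" "c \<in> S" "v = b + c" "b \<noteq> 0" "c \<noteq> 0"
      using sd_units_mem[OF v] unfolding additive_atoms_def by blast
    obtain w where w: "w \<in> S" "w \<noteq> 0" "v * w = 1" using v unfolding sd_units_def by auto
    obtain a t where a: "a \<in> additive_atoms S" "t \<in> S" "1 = a + t"
      using fur one_mem unfolding additively_Furstenberg_def by fastforce
    have a_mem: "a \<in> S" "a \<noteq> 0" using a(1) unfolding additive_atoms_def by auto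
    \<comment> \<open>multiplying \<open>v = b + c\<close> by \<open>a v\<^sup>-\<^sup>1\<close> splits the atom \<open>a\<close>\<close>
    have "a * w * b + a * w * c = a * (v * w)" using bc by (simp add: algebra_simps)
    then have "a = a * w * b + a * w * c" using w(3) by simp
    moreover have "a * w * b \<in> S" "a * w * c \<in> S" "a * w * b \<noteq> 0" "a * w * c \<noteq> 0"
      using a_mem w bc by (auto intro: mult_mem)
    ultimately show False using a(1) unfolding additive_atoms_def by blast
  qed
qed

lemma gs_irreducible_const_coeffs_single:
  fixes h :: "'g::linordered_ab_group_add \<Rightarrow> 'a"
  assumes h: "gs_irreducible S h" and a: "a \<in> S" "a \<notin> sd_units S"
    and coeffs: "\<And>z. h z \<noteq> 0 \<Longrightarrow> h z = a" and "h x \<noteq> 0" "h y \<noteq> 0"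
  shows "x = y"
proof (rule ccontr)
  assume "x \<noteq> y"
  define q :: "'g \<Rightarrow> 'a" where "q z = (if h z \<noteq> 0 then 1 else 0)" for z
  have h_mem: "h \<in> gseries S" using h unfolding gs_irreducible_def by blast
  have q_mem: "q \<in> gseries S"
    by (rule gseries_if_subsupp[OF h_mem]) (auto simp: q_def one_mem zero_mem)
  have h_eq: "h = gs_mult (gs_monom (0::'g) a) q"
    using coeffs by (auto simp: fun_eq_iff gs_mult_monom q_def)
  have "\<forall>p\<in>gseries S. \<forall>q\<in>gseries S. h = gs_mult p q \<longrightarrow> gs_unit S p \<or> gs_unit S q"
    using h unfolding gs_irreducible_def by blast
  moreover have "gs_monom (0::'g) a \<in> gseries S" using a(1) by (rule gs_monom_mem)
  ultimately have "gs_unit S (gs_monom (0::'g) a) \<or> gs_unit S q" using q_mem h_eq by blast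
  moreover have "\<not> gs_unit S (gs_monom (0::'g) a)" using gs_unit_monom_iff a by blast
  moreover have "\<not> gs_unit S q"
    using not_gs_unit_two_supp[OF q_mem, of x y] assms \<open>x \<noteq> y\<close> by (simp add: q_def)
  ultimately show False by blast
qed

lemma not_sum_of_at_most_irreds_const:
  assumes a: "a \<in> additive_atoms S" "a \<notin> sd_units S" and P: "finite P" "n < card P"
  shows "\<not> sum_of_at_most_irreds S n (\<lambda>x. if x \<in> P then a else 0)"
proof
  assume "sum_of_at_most_irreds S n (\<lambda>x. if x \<in> P then a else 0)"
  then obtain k fs where k: "k \<le> n" "\<And>i. i < k \<Longrightarrow> gs_irreducible S (fs i)"
    and f_fun: "(\<lambda>x. if x \<in> P then a else 0) = (\<lambda>x. \<Sum>i<k. fs i x)"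
    unfolding sum_of_at_most_irreds_def by blast
  have f_eq: "(if x \<in> P then a else 0) = (\<Sum>i<k. fs i x)" for x
    using fun_cong[OF f_fun, of x] by simp
  have a_mem: "a \<in> S" "a \<noteq> 0" using a(1) unfolding additive_atoms_def by auto
  have fs_mem: "fs i x \<in> S" if "i < k" for i x
    using k(2)[OF that] gseries_coeff_mem unfolding gs_irreducible_def by blast
  have coeff: "fs i x = a" if "i < k" "fs i x \<noteq> 0" for i x
  proof -
    have "(\<Sum>i<k. fs i x) \<noteq> 0"
      using sum_neq_0[of "{..<k}" "\<lambda>i. fs i x" i] fs_mem that by blast
    then have "x \<in> P" using f_eq[of x] by (auto split: if_splits)
    then show ?thesis
      using atom_sum_eq_summand[of "{..<k}" "\<lambda>i. fs i x" i] fs_mem that a f_eq[of x] by auto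
  qed
  have "\<exists>i<k. fs i x \<noteq> 0" if "x \<in> P" for x
  proof (rule ccontr)
    assume "\<not> ?thesis"
    then have "(\<Sum>i<k. fs i x) = 0" by simp
    then show False using f_eq[of x] that a_mem by simp
  qed
  then have "\<forall>x\<in>P. \<exists>i. i < k \<and> fs i x \<noteq> 0" by blast
  then obtain owner where owner: "\<And>x. x \<in> P \<Longrightarrow> owner x < k \<and> fs (owner x) x \<noteq> 0"
    by (auto dest!: bchoice)
  have "inj_on owner P"
  proof (rule inj_onI)
    fix x y assume "x \<in> P" "y \<in> P" "owner x = owner y"
    then show "x = y"
      using owner[of x] owner[of y] coeff
      by (intro gs_irreducible_const_coeffs_single[OF k(2) a_mem(1) a(2), of "owner x"]) auto
  qed
  then have "card P \<le> card {..<k}"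
    using owner by (intro card_inj_on_le) auto
  then show False using P k by simp
qed

lemma exists_supp_gt1_not_sum_of_at_most_irreds:
  fixes g :: "'g::linordered_ab_group_add"
  assumes a: "a \<in> additive_atoms S" "a \<notin> sd_units S" and "g \<noteq> 0"
  shows "\<exists>f\<in>(gseries S :: ('g \<Rightarrow> 'a) set). supp_gt1 f \<and> \<not> sum_of_at_most_irreds S n f"
proof -
  have "infinite (UNIV :: 'g set)" using infinite_UNIV_if_nonzero assms(3) by blast
  then obtain P :: "'g set" where P: "finite P" "card P = Suc (Suc n)"
    using infinite_arbitrarily_large by blast
  have a_mem: "a \<in> S" "a \<noteq> 0" using a(1) unfolding additive_atoms_def by auto
  define f :: "'g \<Rightarrow> 'a" where "f = (\<lambda>x. if x \<in> P then a else 0)"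
  have "f \<in> gseries S"
    using P(1) a_mem by (intro gseries_if_finite_supp) (auto simp: f_def zero_mem gsupp_def)
  moreover have "supp_gt1 f"
  proof -
    obtain x where x: "x \<in> P" using P(2) by (metis card.empty ex_in_conv nat.distinct(1))
    then have "card (P - {x}) = Suc n" using P by simp
    then have "P - {x} \<noteq> {}" by (metis card.empty nat.distinct(1))
    then obtain y where "y \<in> P" "y \<noteq> x" by blast
    then show ?thesis using x a_mem by (auto simp: supp_gt1_def gsupp_def f_def)
  qed
  moreover have "\<not> sum_of_at_most_irreds S n f"
    unfolding f_def using not_sum_of_at_most_irreds_const[OF a P(1)] P(2) by simp
  ultimately show ?thesis by blast
qed

end

theorem corollary4p7:
  fixes S :: "'a::idom set"
  assumes "semidomain S"
    and "additively_reduced S"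
    and "additively_Furstenberg S"
    and "finitely_generated_group TYPE('g::linordered_ab_group_add)"
    and "\<exists>g::'g. g \<noteq> 0"
  shows "(additive_atoms S = sd_units S \<longleftrightarrow>
           (\<forall>f\<in>(gseries S :: ('g \<Rightarrow> 'a) set). supp_gt1 f \<longrightarrow> sum_of_at_most_irreds S 3 f))
       \<and> ((\<forall>f\<in>(gseries S :: ('g \<Rightarrow> 'a) set). supp_gt1 f \<longrightarrow> sum_of_at_most_irreds S 3 f) \<longleftrightarrow>
           (\<exists>n::nat. n > 2 \<and>
              (\<forall>f\<in>(gseries S :: ('g \<Rightarrow> 'a) set). supp_gt1 f \<longrightarrow> sum_of_at_most_irreds S n f)))"
proof -
  interpret reduced_semidomain S using assms(1,2) by unfold_locales
  let ?decomposable = "\<lambda>n. \<forall>f\<in>(gseries S :: ('g \<Rightarrow> 'a) set). supp_gt1 f \<longrightarrow> sum_of_at_most_irreds S n f"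
  have sufficient: "?decomposable 3" if "additive_atoms S = sd_units S"
  proof (intro ballI impI)
    fix f :: "'g \<Rightarrow> 'a" assume "f \<in> gseries S" "supp_gt1 f"
    then have "sum_of_at_most_irreds S 2 f" by (rule sum_of_at_most_two_irreds[OF assms(3) that])
    then show "sum_of_at_most_irreds S 3 f" by (rule sum_of_at_most_irreds_mono) simp
  qed
  have necessary: "additive_atoms S = sd_units S" if "?decomposable n" for n
  proof (rule ccontr)
    assume "additive_atoms S \<noteq> sd_units S"
    then obtain a where a: "a \<in> additive_atoms S" "a \<notin> sd_units S"
      using sd_units_subset_additive_atoms[OF assms(3)] by blast
    obtain g :: 'g where g: "g \<noteq> 0" using assms(5) by blast
    show False using exists_supp_gt1_not_sum_of_at_most_irreds[OF a g, of n] that by blast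
  qed
  have "(2::nat) < 3" by simp
  then show ?thesis using sufficient necessary by blast
qed

end
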